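(* Let $N\geq 2$ be an integer and let $\mu,m,q$ be independent indeterminates over $\mathbb C$. Then the polynomial $$P(X)=X^{2N-1}+\mu^{N}m\,q\,X^{N-1}+\mu^{2N-1}q^{2}$$ is irreducible in $\mathbb C(\mu,m,q)[X]$. Equivalently, its $2N-1$ roots, regarded as multivalued algebraic functions of $(\mu,m,q)$, are permuted transitively by analytic continuation along closed loops in the parameter space.
   Context: Physical meaning (for orientation only): this is the polynomial equation satisfied by the glueball operator $S$ in the $\mathrm U(N)$ gauge theory with one adjoint field $\phi$, a single flavour of quarks of mass $m$, and tree-level superpotential $\frac12\mu\,\mathrm{Tr}\,\phi^2+\tilde Q(\phi-m)Q$, with instanton factor $q$. Its $2N-1$ roots are the glueball condensates in the $N$ "confining" vacua (unbroken $\mathrm U(N)$) and the $N-1$ "Higgs" vacua (gauge group broken to $\mathrm U(N-1)$); the statement that these vacua can all be smoothly connected to each other (a single phase) is the irreducibility of $P$. *)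

theory Defs
  imports "HOL-Computational_Algebra.Computational_Algebra"
begin

text \<open>The polynomial ring C[mu,m,q] is modelled as the iterated polynomial ring
  complex poly poly poly (innermost variable mu, then m, outermost q); the field
  C(mu,m,q) of rational functions is its fraction field.\<close>

type_synonym ring3 = "complex poly poly poly"
type_synonym ratfun3 = "ring3 fract"

definition var_mu :: ring3 where "var_mu = [:[:[:0, 1:]:]:]"
definition var_m  :: ring3 where "var_m  = [:[:0, 1:]:]"
definition var_q  :: ring3 where "var_q  = [:0, 1:]"

definition emb3 :: "ring3 \<Rightarrow> ratfun3" where "emb3 a = Fract a 1"

definition P_glue :: "nat \<Rightarrow> ratfun3 poly" where
  "P_glue N = monom 1 (2*N - 1)
     + monom (emb3 (var_mu ^ N * var_m * var_q)) (N - 1)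
     + [: emb3 (var_mu ^ (2*N - 1) * var_q ^ 2) :]"

end

theory Submission
  imports Defs "HOL-Computational_Algebra.Field_as_Ring"
begin

text \<open>Setting \<open>\<mu> = q = 1\<close> sends \<open>P\<close> to \<open>X^(2N-1) + m X^(N-1) + 1\<close> in \<open>\<complex>[m][X]\<close>;
  as \<open>P\<close> is monic, this preserves the degrees of its factors, so a nontrivial factorisation
  of \<open>P\<close> would specialise to one of the image. Read as a polynomial in \<open>m\<close> over \<open>\<complex>[X]\<close>,
  the image is linear with coprime coefficients \<open>X^(2N-1) + 1\<close> and \<open>X^(N-1)\<close>, hence
  irreducible, and exchanging the two variables is a ring automorphism. Gauss's lemma finally
  passes from \<open>\<complex>[\<mu>,m,q][X]\<close> to \<open>\<complex>(\<mu>,m,q)[X]\<close>.\<close>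

locale comm_ring_hom =
  fixes hom :: "'a::comm_ring_1 \<Rightarrow> 'b::comm_ring_1"
  assumes hom_add: "hom (x + y) = hom x + hom y"
    and hom_mult: "hom (x * y) = hom x * hom y"
    and hom_1: "hom 1 = 1"
begin

lemma hom_0: "hom 0 = 0"
  using hom_add[of 0 0] by simp

lemma hom_power: "hom (x ^ n) = hom x ^ n"
  by (induction n) (simp_all add: hom_1 hom_mult)

lemma hom_dvd_1: "x dvd 1 \<Longrightarrow> hom x dvd 1"
  by (metis dvdE dvdI hom_1 hom_mult)

lemma map_poly_add: "map_poly hom (p + q) = map_poly hom p + map_poly hom q"
  by (simp add: poly_eq_iff coeff_map_poly hom_add hom_0)

lemma map_poly_mult: "map_poly hom (p * q) = map_poly hom p * map_poly hom q"
proof (induction p)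
  case (pCons a p)
  have "map_poly hom (smult a q) = smult (hom a) (map_poly hom q)"
    by (simp add: poly_eq_iff coeff_map_poly hom_mult hom_0)
  with pCons.IH show ?case
    by (simp add: map_poly_add map_poly_pCons hom_0)
qed simp

lemma comm_ring_hom_map_poly: "comm_ring_hom (map_poly hom)"
  by unfold_locales (simp_all add: map_poly_add map_poly_mult hom_1)

end

lemma comm_ring_hom_poly: "comm_ring_hom (\<lambda>p. poly p x)"
  by unfold_locales simp_all

lemma comm_ring_hom_const_poly: "comm_ring_hom (\<lambda>x. [:x:])"
  by unfold_locales (simp_all add: one_pCons)

lemma comm_ring_hom_to_fract: "comm_ring_hom to_fract"
  by unfold_locales simp_all

lemma comm_ring_hom_comp:
  "comm_ring_hom f \<Longrightarrow> comm_ring_hom g \<Longrightarrow> comm_ring_hom (g \<circ> f)"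
  unfolding comm_ring_hom_def by simp

definition glue_trinomial :: "nat \<Rightarrow> 'a \<Rightarrow> 'a \<Rightarrow> 'a::comm_ring_1 poly" where
  "glue_trinomial N c d = monom 1 (2*N - 1) + monom c (N - 1) + [:d:]"

lemma coeff_glue_trinomial:
  "coeff (glue_trinomial N c d) n =
     (if n = 2*N - 1 then 1 else 0) + (if n = N - 1 then c else 0) + (if n = 0 then d else 0)"
  by (auto simp add: glue_trinomial_def coeff_monom coeff_pCons split: nat.split)

lemma degree_glue_trinomial:
  assumes "N \<ge> 1"
  shows "degree (glue_trinomial N c d) = 2*N - 1"
proof (rule antisym)
  show "degree (glue_trinomial N c d) \<le> 2*N - 1"
    using assms by (intro degree_le) (simp add: coeff_glue_trinomial)
  show "2*N - 1 \<le> degree (glue_trinomial N c d)"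
    by (rule le_degree) (use assms in \<open>simp add: coeff_glue_trinomial\<close>)
qed

lemma lead_coeff_glue_trinomial:
  "N \<ge> 1 \<Longrightarrow> lead_coeff (glue_trinomial N c d) = 1"
  by (simp add: degree_glue_trinomial coeff_glue_trinomial)

lemma map_poly_glue_trinomial:
  assumes "comm_ring_hom f"
  shows "map_poly f (glue_trinomial N c d) = glue_trinomial N (f c) (f d)"
  using assms by (simp add: glue_trinomial_def comm_ring_hom.map_poly_add
      comm_ring_hom.hom_0 comm_ring_hom.hom_1 map_poly_monom map_poly_pCons)

text \<open>Exchanges the two variables of \<open>A[Y][X]\<close>: the coefficients (in \<open>Y\<close>) are lifted to
  constants in \<open>A[X]\<close>, and then the outer variable is evaluated at \<open>X\<close>.\<close>

definition swap_vars :: "'a::comm_ring_1 poly poly \<Rightarrow> 'a poly poly" where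
  "swap_vars g = poly (map_poly (map_poly (\<lambda>x. [:x:])) g) [:[:0, 1:]:]"

lemma comm_ring_hom_swap_vars: "comm_ring_hom swap_vars"
proof -
  have "comm_ring_hom (map_poly (map_poly (\<lambda>x::'a. [:x:])))"
    by (intro comm_ring_hom.comm_ring_hom_map_poly comm_ring_hom_const_poly)
  from comm_ring_hom_comp[OF this comm_ring_hom_poly] show ?thesis
    by (simp add: comp_def swap_vars_def[abs_def])
qed

lemma coeff_coeff_swap_vars: "coeff (coeff (swap_vars g) i) j = coeff (coeff g j) i"
proof (induction g arbitrary: j)
  case (pCons a g)
  have "swap_vars (pCons a g) = map_poly (\<lambda>x. [:x:]) a + smult [:0, 1:] (swap_vars g)"
    by (simp add: swap_vars_def map_poly_pCons)
  with pCons.IH show ?case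
    by (cases j) (simp_all add: coeff_map_poly coeff_pCons)
qed (simp add: swap_vars_def)

lemma swap_vars_swap_vars [simp]: "swap_vars (swap_vars g) = g"
  by (simp add: poly_eq_iff coeff_coeff_swap_vars)

lemma irreducible_if_irreducible_involution:
  fixes h :: "'a::idom \<Rightarrow> 'a"
  assumes "comm_ring_hom h" and "\<And>y. h (h y) = y" and "irreducible (h x)"
  shows "irreducible x"
proof (rule irreducibleI)
  interpret comm_ring_hom h by fact
  show "x \<noteq> 0"
    using \<open>irreducible (h x)\<close> hom_0 by auto
  show "\<not> x dvd 1"
    using \<open>irreducible (h x)\<close> hom_dvd_1 irreducible_not_unit by blast
  fix a b assume "x = a * b"
  then have "h x = h a * h b" by (simp add: hom_mult)
  then have "h a dvd 1 \<or> h b dvd 1"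
    using \<open>irreducible (h x)\<close> irreducibleD by blast
  then show "a dvd 1 \<or> b dvd 1"
    using hom_dvd_1 assms(2) by metis
qed

lemma is_unit_if_degree_map_poly_eq_0:
  fixes f :: "'a::idom \<Rightarrow> 'b::idom"
  assumes "comm_ring_hom f" and "lead_coeff p dvd 1" and "degree (map_poly f p) = 0"
  shows "p dvd 1"
proof -
  have "f (lead_coeff p) \<noteq> 0"
    using comm_ring_hom.hom_dvd_1[OF assms(1,2)] by auto
  then have "degree p = 0"
    using assms(3) by (simp add: map_poly_degree_eq)
  then show ?thesis
    using assms(2) by (metis degree_0_id is_unit_poly_iff)
qed

lemma irreducible_if_irreducible_map_poly:
  fixes f :: "'a::idom \<Rightarrow> 'b::idom"
  assumes f: "comm_ring_hom f" and monic: "lead_coeff p = 1"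
    and irr: "irreducible (map_poly f p)"
  shows "irreducible p"
proof (rule irreducibleI)
  interpret comm_ring_hom f by fact
  show "p \<noteq> 0"
    using monic by auto
  show "\<not> p dvd 1"
    using irr comm_ring_hom.hom_dvd_1[OF comm_ring_hom_map_poly] irreducible_not_unit by blast
  fix a b assume ab: "p = a * b"
  then have "lead_coeff a * lead_coeff b = 1"
    using monic by (simp add: lead_coeff_mult)
  then have units: "lead_coeff a dvd 1" "lead_coeff b dvd 1"
    by (metis dvdI mult.commute)+
  have "map_poly f p = map_poly f a * map_poly f b"
    using ab by (simp add: map_poly_mult)
  then have "map_poly f a dvd 1 \<or> map_poly f b dvd 1"
    using irr irreducibleD by blast
  then show "a dvd 1 \<or> b dvd 1"
    using is_unit_if_degree_map_poly_eq_0[OF f] units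
    by (metis degree_1 is_unit_poly_iff degree_pCons_0)
qed

lemma coprime_power_X_if_poly_0_nonzero:
  fixes p :: "'a::field_gcd poly"
  assumes "poly p 0 \<noteq> 0"
  shows "coprime p ([:0, 1:] ^ n)"
proof -
  have "\<not> [:0, 1:] dvd p"
    using assms dvd_iff_poly_eq_0[of 0 p] by simp
  then have "coprime [:0, 1:] p"
    by (intro prime_elem_imp_coprime prime_elem_linear_field_poly) simp_all
  then show ?thesis
    by (simp add: coprime_commute)
qed

lemma swap_vars_glue_trinomial:
  "swap_vars (glue_trinomial N [:0, 1:] 1) = [:[:0, 1:] ^ (2*N - 1) + 1, [:0, 1:] ^ (N - 1):]"
proof -
  have monom: "swap_vars (monom c n) = map_poly (\<lambda>x. [:x:]) c * [:[:0, 1:] ^ n:]" for c n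
    by (simp add: swap_vars_def map_poly_monom poly_monom poly_const_pow mult.commute)
  show ?thesis
    by (simp add: glue_trinomial_def comm_ring_hom.hom_add[OF comm_ring_hom_swap_vars]
        comm_ring_hom.hom_1[OF comm_ring_hom_swap_vars, unfolded one_pCons] monom map_poly_pCons
        one_pCons)
qed

definition specialise_mu_q :: "ring3 \<Rightarrow> complex poly" where
  "specialise_mu_q r = map_poly (\<lambda>s. poly s 1) (poly r 1)"

lemma comm_ring_hom_specialise_mu_q: "comm_ring_hom specialise_mu_q"
proof -
  have "comm_ring_hom (map_poly (\<lambda>s::complex poly. poly s 1))"
    by (intro comm_ring_hom.comm_ring_hom_map_poly comm_ring_hom_poly)
  from comm_ring_hom_comp[OF comm_ring_hom_poly this] show ?thesis
    by (simp add: comp_def specialise_mu_q_def[abs_def])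
qed

lemma specialise_mu_q_vars:
  "specialise_mu_q var_mu = 1" "specialise_mu_q var_m = [:0, 1:]" "specialise_mu_q var_q = 1"
  by (simp_all add: specialise_mu_q_def var_mu_def var_m_def var_q_def one_pCons map_poly_pCons)

theorem lemma4p1:
  fixes N :: nat
  assumes "N \<ge> 2"
  shows "irreducible (P_glue N)"
proof -
  have N: "N \<ge> 1" using assms by simp
  define p where "p = glue_trinomial N (var_mu ^ N * var_m * var_q) (var_mu ^ (2*N - 1) * var_q ^ 2)"
  have monic: "lead_coeff p = 1"
    unfolding p_def by (rule lead_coeff_glue_trinomial[OF N])
  have nonconst: "degree p \<noteq> 0"
    unfolding p_def using N by (simp add: degree_glue_trinomial)
  interpret specialise: comm_ring_hom specialise_mu_q
    by (rule comm_ring_hom_specialise_mu_q)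
  have "P_glue N = fract_poly p"
    unfolding p_def map_poly_glue_trinomial[OF comm_ring_hom_to_fract]
    by (simp add: P_glue_def glue_trinomial_def emb3_def to_fract_def)
  have "map_poly specialise_mu_q p = glue_trinomial N [:0, 1:] 1"
    by (simp add: p_def map_poly_glue_trinomial[OF comm_ring_hom_specialise_mu_q]
        specialise.hom_mult specialise.hom_power specialise_mu_q_vars)
  have "irreducible (swap_vars (glue_trinomial N [:0, 1:] (1 :: complex poly)))"
    unfolding swap_vars_glue_trinomial
    using N by (intro irreducible_linear_poly coprime_power_X_if_poly_0_nonzero) (simp_all add: power_0_left)
  then have "irreducible (glue_trinomial N [:0, 1:] (1 :: complex poly))"
    by (rule irreducible_if_irreducible_involution[OF comm_ring_hom_swap_vars swap_vars_swap_vars])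
  then have "irreducible p"
    using irreducible_if_irreducible_map_poly[OF comm_ring_hom_specialise_mu_q monic]
      \<open>map_poly specialise_mu_q p = _\<close> by simp
  then show ?thesis
    using \<open>P_glue N = fract_poly p\<close> nonconst_poly_irreducible_iff[OF nonconst] by simp
qed

end
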